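(* There is an existential formula $\phi(X,Y,Z)$ in the signature of $\mathcal{L}(I)$ such that for all finite subsets $A,B,C$ of $I$, $\mathcal{L}(I)\models\phi(A,B,C)$ if and only if $\mathrm{ips}(A,B)=C$.
   Context: Let $I$ be a dense linear order with left endpoint $0$ and no right endpoint. Let $\mathcal{P}_{\mathrm{fci}}(I)$ be the set of finite unions of closed intervals $[i,j]$, $[i,+\infty)$, $(-\infty,j]$ of $I$. $\mathcal{L}(I)$ is the structure with universe $\mathcal{P}_{\mathrm{fci}}(I)$ in the signature $\{\cup,\cap,\bot,c_0,\min,\max,l,r\}$, interpreted as follows. - $\cup$ and $\cap$ are union and intersection. - $\bot$ is $\emptyset$, and $c_0$ is $\{0\}$. - $\min(A)$ is the singleton of the least element of $A$, with $\min(\emptyset)=\emptyset$. - $\max(A)$ is the singleton of the greatest element when $A$ is nonempty and bounded, and $\emptyset$ otherwise. - $l(A)$ and $r(A)$ are the sets of left and right endpoints of $A$. Left endpoints are the minima of the maximal closed intervals composing $A$. Right endpoints are the maxima of the bounded ones. For finite $A,B$, $\mathrm{ips}(A,B)=\{i\in A: s_A(i)\in B\}$, where $s_A$ is the successor function of $A$ with the induced order. *)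

theory Defs
  imports Main
begin

text \<open>The dense linear order I with left endpoint 0 and no right endpoint is modelled
as a type of class dense_linorder, no_top, order_bot; the left endpoint 0 is bot.\<close>

definition closed_intervals :: "('a::linorder) set set" where
  "closed_intervals = {{i..j} | i j. True} \<union> {{i..} | i. True} \<union> {{..j} | j. True}"

definition Pfci :: "('a::linorder) set set" where
  "Pfci = {\<Union>F | F. finite F \<and> F \<subseteq> closed_intervals}"

definition convex_set :: "('a::linorder) set \<Rightarrow> bool" where
  "convex_set S \<longleftrightarrow> (\<forall>x y z. x \<in> S \<longrightarrow> z \<in> S \<longrightarrow> x \<le> y \<longrightarrow> y \<le> z \<longrightarrow> y \<in> S)"

definition max_convex_part :: "('a::linorder) set \<Rightarrow> 'a set \<Rightarrow> bool" where
  "max_convex_part C A \<longleftrightarrow> C \<subseteq> A \<and> convex_set C \<and>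
     (\<forall>D. C \<subseteq> D \<and> D \<subseteq> A \<and> convex_set D \<longrightarrow> D = C)"

definition min_op :: "('a::linorder) set \<Rightarrow> 'a set" where
  "min_op A = {x \<in> A. \<forall>y\<in>A. x \<le> y}"

definition max_op :: "('a::linorder) set \<Rightarrow> 'a set" where
  "max_op A = {x \<in> A. \<forall>y\<in>A. y \<le> x}"

definition l_op :: "('a::linorder) set \<Rightarrow> 'a set" where
  "l_op A = {x. \<exists>C. max_convex_part C A \<and> x \<in> C \<and> (\<forall>y\<in>C. x \<le> y)}"

definition r_op :: "('a::linorder) set \<Rightarrow> 'a set" where
  "r_op A = {x. \<exists>C. max_convex_part C A \<and> x \<in> C \<and> (\<forall>y\<in>C. y \<le> x)}"

datatype tm = Var nat | TUn tm tm | TInter tm tm | Bot | C0 | Mn tm | Mx tm | Lt tm | Rt tm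

datatype fm = TEq tm tm | Neg fm | Conj fm fm | Disj fm fm | TEx nat fm

fun eval_tm :: "(nat \<Rightarrow> ('a::{linorder,order_bot}) set) \<Rightarrow> tm \<Rightarrow> 'a set" where
  "eval_tm v (Var n) = v n"
| "eval_tm v (TUn s t) = eval_tm v s \<union> eval_tm v t"
| "eval_tm v (TInter s t) = eval_tm v s \<inter> eval_tm v t"
| "eval_tm v Bot = {}"
| "eval_tm v C0 = {bot}"
| "eval_tm v (Mn t) = min_op (eval_tm v t)"
| "eval_tm v (Mx t) = max_op (eval_tm v t)"
| "eval_tm v (Lt t) = l_op (eval_tm v t)"
| "eval_tm v (Rt t) = r_op (eval_tm v t)"

text \<open>Satisfaction in L(I): quantifiers range over the universe Pfci.\<close>
fun sat :: "(nat \<Rightarrow> ('a::{linorder,order_bot}) set) \<Rightarrow> fm \<Rightarrow> bool" where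
  "sat v (TEq s t) \<longleftrightarrow> eval_tm v s = eval_tm v t"
| "sat v (Neg f) \<longleftrightarrow> \<not> sat v f"
| "sat v (Conj f g) \<longleftrightarrow> sat v f \<and> sat v g"
| "sat v (Disj f g) \<longleftrightarrow> sat v f \<or> sat v g"
| "sat v (TEx x f) \<longleftrightarrow> (\<exists>S \<in> Pfci. sat (v(x := S)) f)"

fun fv_tm :: "tm \<Rightarrow> nat set" where
  "fv_tm (Var n) = {n}"
| "fv_tm (TUn s t) = fv_tm s \<union> fv_tm t"
| "fv_tm (TInter s t) = fv_tm s \<union> fv_tm t"
| "fv_tm Bot = {}"
| "fv_tm C0 = {}"
| "fv_tm (Mn t) = fv_tm t"
| "fv_tm (Mx t) = fv_tm t"
| "fv_tm (Lt t) = fv_tm t"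
| "fv_tm (Rt t) = fv_tm t"

fun fv :: "fm \<Rightarrow> nat set" where
  "fv (TEq s t) = fv_tm s \<union> fv_tm t"
| "fv (Neg f) = fv f"
| "fv (Conj f g) = fv f \<union> fv g"
| "fv (Disj f g) = fv f \<union> fv g"
| "fv (TEx x f) = fv f - {x}"

fun qfree :: "fm \<Rightarrow> bool" where
  "qfree (TEq s t) = True"
| "qfree (Neg f) = qfree f"
| "qfree (Conj f g) = (qfree f \<and> qfree g)"
| "qfree (Disj f g) = (qfree f \<and> qfree g)"
| "qfree (TEx x f) = False"

fun existential :: "fm \<Rightarrow> bool" where
  "existential (TEx x f) = existential f"
| "existential f = qfree f"

definition ips :: "('a::linorder) set \<Rightarrow> 'a set \<Rightarrow> 'a set" where
  "ips A B = {i \<in> A. \<exists>j \<in> A. i < j \<and> (\<forall>k \<in> A. i < k \<longrightarrow> j \<le> k) \<and> j \<in> B}"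

end

theory Submission
  imports Defs
begin

text \<open>
  Sort \<open>A\<close> as \<open>a\<^sub>0 < \<dots> < a\<^sub>n\<close>. The gaps \<open>[a\<^sub>k, a\<^sub>k\<^sub>+\<^sub>1]\<close> with \<open>k\<close> even, resp. odd, are
  pairwise separated, so their unions \<open>D\<close> and \<open>E\<close> have exactly the \<open>a\<^sub>k\<close> as left and the
  \<open>a\<^sub>k\<^sub>+\<^sub>1\<close> as right endpoints; keeping only the gaps whose right end lies in \<open>B\<close> yields
  \<open>D1 \<subseteq> D\<close>, \<open>E1 \<subseteq> E\<close> with \<open>ips(A,B) = l(D1) \<union> l(E1)\<close>. Conversely, the quantifier-free
  conditions describing this picture (endpoints of \<open>D\<close> lie in \<open>A\<close>, \<open>D\<close> meets \<open>A\<close> only in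
  endpoints, no component is a point, \<open>D1\<close> is cut out of \<open>D\<close> by its right endpoints in \<open>B\<close>,
  \<open>D\<close> and \<open>E\<close> lie below \<open>max A\<close>) force every component of \<open>D\<close> to run from a point of
  \<open>A\<close> to its successor in \<open>A\<close>, hence \<open>l(D1) \<union> l(E1) = ips(A,B)\<close> for all witnesses.
\<close>

section \<open>Endpoints via maximal convex parts\<close>

lemma convex_set_iff: "convex_set C \<longleftrightarrow> (\<forall>x\<in>C. \<forall>y\<in>C. {x..y} \<subseteq> C)"
  unfolding convex_set_def by (meson atLeastAtMost_iff subset_iff)

lemma convex_set_atLeastAtMost: "convex_set {a..b}"
  by (simp add: convex_set_iff)

lemma convex_set_Un:
  assumes "convex_set S" "convex_set T" "S \<inter> T \<noteq> {}"
  shows "convex_set (S \<union> T)"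
  unfolding convex_set_iff
proof (intro ballI subsetI)
  obtain c where c: "c \<in> S" "c \<in> T" using assms(3) by blast
  fix x z y assume "x \<in> S \<union> T" "z \<in> S \<union> T" "y \<in> {x..z}"
  moreover have "{x..c} \<subseteq> S \<union> T" "{c..z} \<subseteq> S \<union> T"
    using calculation(1,2) c assms(1,2) unfolding convex_set_iff by blast+
  ultimately show "y \<in> S \<union> T" by (meson atLeastAtMost_iff le_cases subsetD)
qed

lemma max_convex_part_absorbs:
  assumes C: "max_convex_part C S" and T: "convex_set T" "T \<subseteq> S" "C \<inter> T \<noteq> {}"
  shows "T \<subseteq> C"
proof -
  have "convex_set (C \<union> T)" "C \<union> T \<subseteq> S"
    using C T convex_set_Un unfolding max_convex_part_def by auto
  then have "C \<union> T = C" using C unfolding max_convex_part_def by blast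
  then show ?thesis by blast
qed

lemma ex_max_convex_part:
  assumes "p \<in> S"
  obtains C where "max_convex_part C S" "p \<in> C"
proof -
  define C where "C = \<Union>{T. T \<subseteq> S \<and> convex_set T \<and> p \<in> T}"
  have "convex_set {p}" by (simp add: convex_set_iff)
  then have "p \<in> C" unfolding C_def using assms by (intro UnionI[of "{p}"]) auto
  have "C \<subseteq> S" unfolding C_def by blast
  have "convex_set C"
    unfolding convex_set_iff
  proof (intro ballI)
    fix x z assume "x \<in> C" "z \<in> C"
    then obtain T1 T2 where T: "T1 \<subseteq> S" "convex_set T1" "p \<in> T1" "x \<in> T1"
      "T2 \<subseteq> S" "convex_set T2" "p \<in> T2" "z \<in> T2" unfolding C_def by blast
    then have "convex_set (T1 \<union> T2)" using convex_set_Un by blast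
    then have "{x..z} \<subseteq> T1 \<union> T2" using T unfolding convex_set_iff by blast
    then show "{x..z} \<subseteq> C" unfolding C_def using T by blast
  qed
  moreover have "D = C" if "C \<subseteq> D" "D \<subseteq> S" "convex_set D" for D
  proof -
    have "p \<in> D" using that(1) \<open>p \<in> C\<close> by blast
    then have "D \<subseteq> C" unfolding C_def using that(2,3) by blast
    then show "D = C" using that(1) by blast
  qed
  ultimately have "max_convex_part C S"
    unfolding max_convex_part_def using \<open>C \<subseteq> S\<close> by blast
  then show thesis using that \<open>p \<in> C\<close> by blast
qed

lemma in_l_op_iff: "p \<in> l_op S \<longleftrightarrow> p \<in> S \<and> \<not> (\<exists>y<p. {y..p} \<subseteq> S)"
proof
  assume "p \<in> l_op S"
  then obtain C where C: "max_convex_part C S" "p \<in> C" "\<forall>y\<in>C. p \<le> y"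
    unfolding l_op_def by blast
  have "\<not> {y..p} \<subseteq> S" if "y < p" for y
  proof
    assume "{y..p} \<subseteq> S"
    moreover have "p \<in> C \<inter> {y..p}" using C(2) that by simp
    ultimately have "{y..p} \<subseteq> C"
      using max_convex_part_absorbs[OF C(1) convex_set_atLeastAtMost] by blast
    then have "y \<in> C" using that by auto
    then have "p \<le> y" using C(3) by blast
    then show False using that by simp
  qed
  then show "p \<in> S \<and> \<not> (\<exists>y<p. {y..p} \<subseteq> S)" using C unfolding max_convex_part_def by blast
next
  assume p: "p \<in> S \<and> \<not> (\<exists>y<p. {y..p} \<subseteq> S)"
  then obtain C where C: "max_convex_part C S" "p \<in> C" using ex_max_convex_part by blast
  then have "convex_set C" "C \<subseteq> S" unfolding max_convex_part_def by auto
  have "p \<le> y" if "y \<in> C" for y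
  proof (rule ccontr)
    assume "\<not> p \<le> y"
    moreover have "{y..p} \<subseteq> S"
      using \<open>convex_set C\<close> that C(2) \<open>C \<subseteq> S\<close> unfolding convex_set_iff by blast
    ultimately show False using p by auto
  qed
  then show "p \<in> l_op S" unfolding l_op_def using C by blast
qed

lemma in_r_op_iff: "p \<in> r_op S \<longleftrightarrow> p \<in> S \<and> \<not> (\<exists>y>p. {p..y} \<subseteq> S)"
proof
  assume "p \<in> r_op S"
  then obtain C where C: "max_convex_part C S" "p \<in> C" "\<forall>y\<in>C. y \<le> p"
    unfolding r_op_def by blast
  have "\<not> {p..y} \<subseteq> S" if "p < y" for y
  proof
    assume "{p..y} \<subseteq> S"
    moreover have "p \<in> C \<inter> {p..y}" using C(2) that by simp
    ultimately have "{p..y} \<subseteq> C"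
      using max_convex_part_absorbs[OF C(1) convex_set_atLeastAtMost] by blast
    then have "y \<in> C" using that by auto
    then have "y \<le> p" using C(3) by blast
    then show False using that by simp
  qed
  then show "p \<in> S \<and> \<not> (\<exists>y>p. {p..y} \<subseteq> S)" using C unfolding max_convex_part_def by blast
next
  assume p: "p \<in> S \<and> \<not> (\<exists>y>p. {p..y} \<subseteq> S)"
  then obtain C where C: "max_convex_part C S" "p \<in> C" using ex_max_convex_part by blast
  then have "convex_set C" "C \<subseteq> S" unfolding max_convex_part_def by auto
  have "y \<le> p" if "y \<in> C" for y
  proof (rule ccontr)
    assume "\<not> y \<le> p"
    moreover have "{p..y} \<subseteq> S"
      using \<open>convex_set C\<close> that C(2) \<open>C \<subseteq> S\<close> unfolding convex_set_iff by blast
    ultimately show False using p by auto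
  qed
  then show "p \<in> r_op S" unfolding r_op_def using C by blast
qed

lemma l_op_unique:
  assumes "p \<in> l_op S" "p' \<in> l_op S" "{p..x} \<subseteq> S" "{p'..x} \<subseteq> S" "p \<le> x" "p' \<le> x"
  shows "p = p'"
proof (rule ccontr)
  assume "p \<noteq> p'"
  then consider "p < p'" | "p' < p" by fastforce
  then show False
  proof cases
    case 1
    then have "{p..p'} \<subseteq> S" using assms(3,6) by (meson atLeastatMost_subset_iff order_refl subset_trans)
    then show False using 1 assms(2) unfolding in_l_op_iff by blast
  next
    case 2
    then have "{p'..p} \<subseteq> S" using assms(4,5) by (meson atLeastatMost_subset_iff order_refl subset_trans)
    then show False using 2 assms(1) unfolding in_l_op_iff by blast
  qed
qed

lemma r_op_unique:
  assumes "q \<in> r_op S" "q' \<in> r_op S" "{x..q} \<subseteq> S" "{x..q'} \<subseteq> S" "x \<le> q" "x \<le> q'"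
  shows "q = q'"
proof (rule ccontr)
  assume "q \<noteq> q'"
  then consider "q < q'" | "q' < q" by fastforce
  then show False
  proof cases
    case 1
    then have "{q..q'} \<subseteq> S" using assms(4,5) by (meson atLeastatMost_subset_iff order_refl subset_trans)
    then show False using 1 assms(1) unfolding in_r_op_iff by blast
  next
    case 2
    then have "{q'..q} \<subseteq> S" using assms(3,6) by (meson atLeastatMost_subset_iff order_refl subset_trans)
    then show False using 2 assms(2) unfolding in_r_op_iff by blast
  qed
qed

section \<open>Endpoints of finite unions of closed intervals\<close>

lemma closed_interval_start:
  fixes J :: "'a::{linorder,order_bot} set"
  assumes "J \<in> closed_intervals"
  shows "\<exists>p. \<forall>z\<in>J. p \<le> z \<and> {p..z} \<subseteq> J"
  using assms unfolding closed_intervals_def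
proof (elim UnE CollectE exE conjE)
  fix i j assume "J = {i..j}" then show ?thesis by auto
next
  fix i assume "J = {i..}" then show ?thesis by auto
next
  fix j assume "J = {..j}" then show ?thesis by (intro exI[of _ bot]) auto
qed

lemma closed_interval_end:
  fixes J :: "'a::linorder set"
  assumes "J \<in> closed_intervals" "\<forall>y\<in>J. y \<le> b"
  shows "\<exists>q. \<forall>z\<in>J. z \<le> q \<and> {z..q} \<subseteq> J"
  using assms(1) unfolding closed_intervals_def
proof (elim UnE CollectE exE conjE)
  fix i j assume "J = {i..j}" then show ?thesis by auto
next
  fix i assume "J = {i..}" then show ?thesis using assms(2) by (intro exI[of _ b]) auto
next
  fix j assume "J = {..j}" then show ?thesis by auto
qed

lemma Pfci_finite_starts:
  fixes S :: "'a::{linorder,order_bot} set"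
  assumes "S \<in> Pfci"
  obtains L where "finite L" "\<forall>z\<in>S. \<exists>p\<in>L. p \<le> z \<and> {p..z} \<subseteq> S"
proof -
  obtain F where F: "S = \<Union>F" "finite F" "F \<subseteq> closed_intervals"
    using assms unfolding Pfci_def by blast
  then obtain start where "\<forall>J\<in>F. \<forall>z\<in>J. start J \<le> z \<and> {start J..z} \<subseteq> J"
    using closed_interval_start by (metis subsetD)
  then have "\<forall>z\<in>S. \<exists>p\<in>start ` F. p \<le> z \<and> {p..z} \<subseteq> S" using F(1) by blast
  then show thesis using that F(2) by blast
qed

lemma Pfci_finite_ends:
  fixes S :: "'a::linorder set"
  assumes "S \<in> Pfci" "\<forall>y\<in>S. y \<le> b"
  obtains L where "finite L" "\<forall>z\<in>S. \<exists>q\<in>L. z \<le> q \<and> {z..q} \<subseteq> S"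
proof -
  obtain F where F: "S = \<Union>F" "finite F" "F \<subseteq> closed_intervals"
    using assms(1) unfolding Pfci_def by blast
  moreover have "\<forall>J\<in>F. \<forall>y\<in>J. y \<le> b" using assms(2) F(1) by blast
  ultimately obtain stop where "\<forall>J\<in>F. \<forall>z\<in>J. z \<le> stop J \<and> {z..stop J} \<subseteq> J"
    using closed_interval_end by (metis subsetD)
  then have "\<forall>z\<in>S. \<exists>q\<in>stop ` F. z \<le> q \<and> {z..q} \<subseteq> S" using F(1) by blast
  then show thesis using that F(2) by blast
qed

lemma l_op_below:
  fixes S :: "'a::linorder set"
  assumes L: "finite L" "\<forall>z\<in>S. \<exists>p\<in>L. p \<le> z \<and> {p..z} \<subseteq> S" and "x \<in> S"
  obtains p where "p \<le> x" "{p..x} \<subseteq> S" "p \<in> l_op S"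
proof -
  define P where "P = {p\<in>L. p \<le> x \<and> {p..x} \<subseteq> S}"
  define m where "m = Min P"
  have "finite P" "P \<noteq> {}" using L \<open>x \<in> S\<close> unfolding P_def by auto
  then have "m \<in> P" "\<forall>q\<in>P. m \<le> q" unfolding m_def by simp_all
  then have m: "m \<le> x" "{m..x} \<subseteq> S" "\<forall>q\<in>L. q \<le> x \<and> {q..x} \<subseteq> S \<longrightarrow> m \<le> q"
    unfolding P_def by auto
  have "\<not> {y..m} \<subseteq> S" if "y < m" for y
  proof
    assume y: "{y..m} \<subseteq> S"
    then have "y \<in> S" using \<open>y < m\<close> by auto
    then obtain q where q: "q \<in> L" "q \<le> y" "{q..y} \<subseteq> S" using L(2) by blast
    have "{q..x} \<subseteq> {q..y} \<union> {y..m} \<union> {m..x}" by auto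
    then have "{q..x} \<subseteq> S" using q(3) y m(2) by blast
    then have "m \<le> q" using m q \<open>y < m\<close> by auto
    then show False using q(2) \<open>y < m\<close> by simp
  qed
  then have "m \<in> l_op S" unfolding in_l_op_iff using m by auto
  then show thesis using that m by blast
qed

lemma r_op_above:
  fixes S :: "'a::linorder set"
  assumes L: "finite L" "\<forall>z\<in>S. \<exists>q\<in>L. z \<le> q \<and> {z..q} \<subseteq> S" and "x \<in> S"
  obtains q where "x \<le> q" "{x..q} \<subseteq> S" "q \<in> r_op S"
proof -
  define Q where "Q = {q\<in>L. x \<le> q \<and> {x..q} \<subseteq> S}"
  define m where "m = Max Q"
  have "finite Q" "Q \<noteq> {}" using L \<open>x \<in> S\<close> unfolding Q_def by auto
  then have "m \<in> Q" "\<forall>q\<in>Q. q \<le> m" unfolding m_def by simp_all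
  then have m: "x \<le> m" "{x..m} \<subseteq> S" "\<forall>q\<in>L. x \<le> q \<and> {x..q} \<subseteq> S \<longrightarrow> q \<le> m"
    unfolding Q_def by auto
  have "\<not> {m..y} \<subseteq> S" if "m < y" for y
  proof
    assume y: "{m..y} \<subseteq> S"
    then have "y \<in> S" using \<open>m < y\<close> by auto
    then obtain q where q: "q \<in> L" "y \<le> q" "{y..q} \<subseteq> S" using L(2) by blast
    have "{x..q} \<subseteq> {x..m} \<union> {m..y} \<union> {y..q}" by auto
    then have "{x..q} \<subseteq> S" using q(3) y m(2) by blast
    then have "q \<le> m" using m q \<open>m < y\<close> by auto
    then show False using q(2) \<open>m < y\<close> by simp
  qed
  then have "m \<in> r_op S" unfolding in_r_op_iff using m by auto
  then show thesis using that m by blast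
qed

lemma Pfci_l_op_below:
  fixes S :: "'a::{linorder,order_bot} set"
  assumes "S \<in> Pfci" "x \<in> S"
  obtains p where "p \<le> x" "{p..x} \<subseteq> S" "p \<in> l_op S"
  using Pfci_finite_starts[OF assms(1)] l_op_below assms(2) by metis

lemma Pfci_r_op_above:
  fixes S :: "'a::linorder set"
  assumes "S \<in> Pfci" "\<forall>y\<in>S. y \<le> b" "x \<in> S"
  obtains q where "x \<le> q" "{x..q} \<subseteq> S" "q \<in> r_op S"
  using Pfci_finite_ends[OF assms(1,2)] r_op_above assms(3) by metis

section \<open>Blocks between consecutive points\<close>

text \<open>Once \<open>S\<close> is bounded above, its components are the intervals \<open>[a, a']\<close> between some
  consecutive points \<open>a < a'\<close> of \<open>A\<close> (\<open>consecutive_blocks_next_in\<close>).\<close>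

definition consecutive_blocks :: "'a::linorder set \<Rightarrow> 'a set \<Rightarrow> bool" where
  "consecutive_blocks A S \<longleftrightarrow>
     l_op S \<union> r_op S \<subseteq> A \<and> S \<inter> A \<subseteq> l_op S \<union> r_op S \<and> l_op S \<inter> r_op S = {}"

text \<open>\<open>S1\<close> is the union of the components of \<open>S\<close> whose right endpoint lies in \<open>B\<close>.\<close>

definition selected_blocks :: "'a::linorder set \<Rightarrow> 'a set \<Rightarrow> 'a set \<Rightarrow> bool" where
  "selected_blocks B S S1 \<longleftrightarrow> S1 \<subseteq> S \<and> l_op S1 \<subseteq> l_op S \<and> r_op S1 = r_op S \<inter> B"

definition next_in :: "'a::linorder set \<Rightarrow> 'a \<Rightarrow> 'a \<Rightarrow> bool" where
  "next_in A i j \<longleftrightarrow> i \<in> A \<and> j \<in> A \<and> i < j \<and> (\<forall>k\<in>A. i < k \<longrightarrow> j \<le> k)"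

lemma in_ips_iff: "i \<in> ips A B \<longleftrightarrow> (\<exists>j\<in>B. next_in A i j)"
  unfolding ips_def next_in_def by blast

lemma next_in_unique: "next_in A i j \<Longrightarrow> next_in A i j' \<Longrightarrow> j = j'"
  unfolding next_in_def by (meson order.antisym)

lemma consecutive_blocks_next_in:
  fixes S :: "'a::linorder set"
  assumes S: "S \<in> Pfci" "\<forall>y\<in>S. y \<le> b" and cb: "consecutive_blocks A S" and p: "p \<in> l_op S"
  obtains q where "{p..q} \<subseteq> S" "q \<in> r_op S" "next_in A p q"
proof -
  have "p \<in> S" using p unfolding in_l_op_iff by blast
  then obtain q where q: "p \<le> q" "{p..q} \<subseteq> S" "q \<in> r_op S" using Pfci_r_op_above[OF S] by blast
  have "p \<in> A" "q \<in> A" "p \<noteq> q" using cb p q(3) unfolding consecutive_blocks_def by blast+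
  have "q \<le> a" if a: "a \<in> A" "p < a" for a
  proof (rule ccontr)
    assume "\<not> q \<le> a"
    then have "a < q" by simp
    then have "{p..a} \<subseteq> {p..q}" "{a..q} \<subseteq> {p..q}" using a(2) by auto
    then have "{p..a} \<subseteq> S" "{a..q} \<subseteq> S" using q(2) by blast+
    then have "a \<notin> l_op S" "a \<notin> r_op S"
      using a(2) \<open>a < q\<close> unfolding in_l_op_iff in_r_op_iff by blast+
    moreover have "a \<in> S" using \<open>{a..q} \<subseteq> S\<close> \<open>a < q\<close> by auto
    ultimately show False using cb a(1) unfolding consecutive_blocks_def by blast
  qed
  then have "next_in A p q" unfolding next_in_def using \<open>p \<in> A\<close> \<open>q \<in> A\<close> \<open>p \<noteq> q\<close> q(1) by auto
  then show thesis using that q by blast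
qed

lemma l_op_selected_blocks:
  fixes S :: "'a::{linorder,order_bot} set"
  assumes S: "S \<in> Pfci" "\<forall>y\<in>S. y \<le> b" and S1: "S1 \<in> Pfci"
    and cb: "consecutive_blocks A S" and sb: "selected_blocks B S S1"
  shows "l_op S1 = l_op S \<inter> ips A B"
proof (intro set_eqI iffI)
  fix z assume z: "z \<in> l_op S1"
  then have "z \<in> l_op S" using sb unfolding selected_blocks_def by blast
  have "z \<in> S1" using z unfolding in_l_op_iff by blast
  obtain q where q: "{z..q} \<subseteq> S" "q \<in> r_op S" "next_in A z q"
    using consecutive_blocks_next_in[OF S cb \<open>z \<in> l_op S\<close>] by blast
  have "\<forall>y\<in>S1. y \<le> b" using S(2) sb unfolding selected_blocks_def by blast
  then obtain q1 where q1: "z \<le> q1" "{z..q1} \<subseteq> S1" "q1 \<in> r_op S1"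
    using Pfci_r_op_above[OF S1] \<open>z \<in> S1\<close> by blast
  then have "q1 \<in> r_op S" "q1 \<in> B" "{z..q1} \<subseteq> S" using sb unfolding selected_blocks_def by blast+
  moreover have "z \<le> q" using q(3) unfolding next_in_def by (simp add: less_imp_le)
  ultimately have "q1 = q" using r_op_unique[OF _ q(2) _ q(1) q1(1)] by blast
  then show "z \<in> l_op S \<inter> ips A B"
    using \<open>z \<in> l_op S\<close> \<open>q1 \<in> B\<close> q(3) in_ips_iff by blast
next
  fix i assume i: "i \<in> l_op S \<inter> ips A B"
  then obtain q where q: "{i..q} \<subseteq> S" "q \<in> r_op S" "next_in A i q"
    using consecutive_blocks_next_in[OF S cb] by blast
  obtain j where "j \<in> B" "next_in A i j" using i in_ips_iff by blast
  then have "q \<in> r_op S1" using next_in_unique[OF q(3)] q(2) sb unfolding selected_blocks_def by blast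
  then have "q \<in> S1" unfolding in_r_op_iff by blast
  then obtain p where p: "p \<le> q" "{p..q} \<subseteq> S1" "p \<in> l_op S1"
    using Pfci_l_op_below[OF S1] by blast
  then have "p \<in> l_op S" "{p..q} \<subseteq> S" using sb unfolding selected_blocks_def by blast+
  moreover have "i \<le> q" using q(3) unfolding next_in_def by (simp add: less_imp_le)
  ultimately have "p = i" using l_op_unique[OF _ _ _ q(1) p(1)] i by blast
  then show "i \<in> l_op S1" using p(3) by simp
qed

text \<open>The \<open>max_op\<close> condition bounds \<open>D\<close> and \<open>E\<close> by \<open>max A\<close>: an unbounded component would
  have a left endpoint but no right endpoint.\<close>

definition ips_witnesses ::
    "'a::linorder set \<Rightarrow> 'a set \<Rightarrow> 'a set \<Rightarrow> 'a set \<Rightarrow> 'a set \<Rightarrow> 'a set \<Rightarrow> 'a set \<Rightarrow> bool"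
  where
  "ips_witnesses A B C D E D1 E1 \<longleftrightarrow>
     consecutive_blocks A D \<and> selected_blocks B D D1 \<and>
     consecutive_blocks A E \<and> selected_blocks B E E1 \<and>
     A \<subseteq> l_op D \<union> l_op E \<union> max_op A \<and> max_op (D \<union> E \<union> A) = max_op A \<and>
     C = l_op D1 \<union> l_op E1"

lemma ips_subset_Diff_max_op: "ips A B \<subseteq> A - max_op A"
  unfolding ips_def max_op_def by (auto dest: leD)

lemma ips_eq_if_witnesses:
  fixes A :: "'a::{linorder,order_bot} set"
  assumes "finite A" and Pfci: "D \<in> Pfci" "E \<in> Pfci" "D1 \<in> Pfci" "E1 \<in> Pfci"
    and w: "ips_witnesses A B C D E D1 E1"
  shows "ips A B = C"
proof (cases "A = {}")
  case True
  have "C \<subseteq> A"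
    using w unfolding ips_witnesses_def consecutive_blocks_def selected_blocks_def by blast
  then show ?thesis using True unfolding ips_def by blast
next
  case False
  then have "Max A \<in> max_op A" using \<open>finite A\<close> unfolding max_op_def by simp
  then have "Max A \<in> max_op (D \<union> E \<union> A)" using w unfolding ips_witnesses_def by simp
  then have bounds: "\<forall>y\<in>D. y \<le> Max A" "\<forall>y\<in>E. y \<le> Max A" unfolding max_op_def by auto
  have "l_op D1 = l_op D \<inter> ips A B" "l_op E1 = l_op E \<inter> ips A B"
    using w l_op_selected_blocks[OF Pfci(1) bounds(1) Pfci(3)]
      l_op_selected_blocks[OF Pfci(2) bounds(2) Pfci(4)]
    unfolding ips_witnesses_def by blast+
  then have "C = (l_op D \<inter> ips A B) \<union> (l_op E \<inter> ips A B)"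
    using w unfolding ips_witnesses_def by simp
  moreover have "ips A B \<subseteq> l_op D \<union> l_op E"
    using ips_subset_Diff_max_op w unfolding ips_witnesses_def by blast
  ultimately show ?thesis by blast
qed

section \<open>Unions of gaps of a sorted list\<close>

lemma l_op_UN_separated:
  fixes a b :: "'i \<Rightarrow> 'a::dense_linorder"
  assumes "finite K" and ab: "\<And>k. k \<in> K \<Longrightarrow> a k \<le> b k"
    and sep: "\<And>k m. k \<in> K \<Longrightarrow> m \<in> K \<Longrightarrow> k \<noteq> m \<Longrightarrow> b k < a m \<or> b m < a k"
  shows "l_op (\<Union>k\<in>K. {a k..b k}) = a ` K" (is "l_op ?S = _")
proof (intro set_eqI iffI)
  fix p assume "p \<in> l_op ?S"
  then have p: "p \<in> ?S" "\<not> (\<exists>y<p. {y..p} \<subseteq> ?S)" unfolding in_l_op_iff by auto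
  then obtain k where k: "k \<in> K" "a k \<le> p" "p \<le> b k" by auto
  then have "{a k..p} \<subseteq> {a k..b k}" by simp
  then have "{a k..p} \<subseteq> ?S" using k(1) by blast
  then have "p = a k" using p(2) k(2) by (metis order.not_eq_order_implies_strict)
  then show "p \<in> a ` K" using k(1) by blast
next
  fix p assume "p \<in> a ` K"
  then obtain k where k: "k \<in> K" "p = a k" by blast
  have "\<not> {y..p} \<subseteq> ?S" if "y < p" for y
  proof
    assume y: "{y..p} \<subseteq> ?S"
    \<comment> \<open>a point \<open>z < p\<close> above all intervals ending below \<open>p\<close> lies in none of them\<close>
    define M where "M = insert y (b ` {m\<in>K. b m < p})"
    have "finite M" "y \<in> M" "\<forall>c\<in>M. c < p" using \<open>finite K\<close> \<open>y < p\<close> unfolding M_def by auto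
    then have "Max M < p" "y \<le> Max M" using Max_less_iff by auto
    then obtain z where z: "Max M < z" "z < p" using dense by blast
    then have "z \<in> {y..p}" using \<open>y \<le> Max M\<close> by (simp add: less_imp_le order.strict_trans1)
    then obtain m where m: "m \<in> K" "a m \<le> z" "z \<le> b m" using y by auto
    show False
    proof (cases "m = k")
      case True
      then have "a k \<le> z" using m(2) by simp
      then show False using z(2) k(2) by order
    next
      case False
      then consider "b m < a k" | "b k < a m" using sep[OF m(1) k(1)] by blast
      then show False
      proof cases
        case 1
        then have "b m \<in> M" using k(2) m(1) unfolding M_def by blast
        then have "b m \<le> Max M" using \<open>finite M\<close> by simp
        then show False using z(1) m(3) by order
      next
        case 2
        then show False using ab[OF k(1)] m(2) z(2) k(2) by order
      qed
    qed
  qed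
  moreover have "p \<in> ?S" using k ab by auto
  ultimately show "p \<in> l_op ?S" unfolding in_l_op_iff by blast
qed

lemma r_op_UN_separated:
  fixes a b :: "'i \<Rightarrow> 'a::dense_linorder"
  assumes "finite K" and ab: "\<And>k. k \<in> K \<Longrightarrow> a k \<le> b k"
    and sep: "\<And>k m. k \<in> K \<Longrightarrow> m \<in> K \<Longrightarrow> k \<noteq> m \<Longrightarrow> b k < a m \<or> b m < a k"
  shows "r_op (\<Union>k\<in>K. {a k..b k}) = b ` K" (is "r_op ?S = _")
proof (intro set_eqI iffI)
  fix p assume "p \<in> r_op ?S"
  then have p: "p \<in> ?S" "\<not> (\<exists>y>p. {p..y} \<subseteq> ?S)" unfolding in_r_op_iff by auto
  then obtain k where k: "k \<in> K" "a k \<le> p" "p \<le> b k" by auto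
  then have "{p..b k} \<subseteq> {a k..b k}" by simp
  then have "{p..b k} \<subseteq> ?S" using k(1) by blast
  then have "p = b k" using p(2) k(3) by (metis order.not_eq_order_implies_strict)
  then show "p \<in> b ` K" using k(1) by blast
next
  fix p assume "p \<in> b ` K"
  then obtain k where k: "k \<in> K" "p = b k" by blast
  have "\<not> {p..y} \<subseteq> ?S" if "p < y" for y
  proof
    assume y: "{p..y} \<subseteq> ?S"
    \<comment> \<open>a point \<open>z > p\<close> below all intervals starting above \<open>p\<close> lies in none of them\<close>
    define M where "M = insert y (a ` {m\<in>K. p < a m})"
    have "finite M" "y \<in> M" "\<forall>c\<in>M. p < c" using \<open>finite K\<close> \<open>p < y\<close> unfolding M_def by auto
    then have "p < Min M" "Min M \<le> y" using Min_gr_iff by auto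
    then obtain z where z: "p < z" "z < Min M" using dense by blast
    then have "z \<in> {p..y}" using \<open>Min M \<le> y\<close> by (simp add: less_imp_le order.strict_trans2)
    then obtain m where m: "m \<in> K" "a m \<le> z" "z \<le> b m" using y by auto
    show False
    proof (cases "m = k")
      case True
      then have "z \<le> b k" using m(3) by simp
      then show False using z(1) k(2) by order
    next
      case False
      then consider "b k < a m" | "b m < a k" using sep[OF k(1) m(1)] by blast
      then show False
      proof cases
        case 1
        then have "a m \<in> M" using k(2) m(1) unfolding M_def by blast
        then have "Min M \<le> a m" using \<open>finite M\<close> by simp
        then show False using z(2) m(2) by order
      next
        case 2
        then show False using ab[OF k(1)] m(3) z(1) k(2) by order
      qed
    qed
  qed
  moreover have "p \<in> ?S" using k ab by auto
  ultimately show "p \<in> r_op ?S" unfolding in_r_op_iff by blast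
qed

lemma strict_sorted_nth_less_iff:
  fixes xs :: "'a::linorder list"
  assumes "sorted_wrt (<) xs" "i < length xs" "j < length xs"
  shows "xs ! i < xs ! j \<longleftrightarrow> i < j"
  using assms by (metis linorder_neqE_nat order.asym sorted_wrt_nth_less)

lemma strict_sorted_nth_le_iff:
  fixes xs :: "'a::linorder list"
  assumes "sorted_wrt (<) xs" "i < length xs" "j < length xs"
  shows "xs ! i \<le> xs ! j \<longleftrightarrow> i \<le> j"
  using strict_sorted_nth_less_iff[OF assms(1,3,2)] by (metis not_less)

definition gaps_union :: "'a::linorder list \<Rightarrow> nat set \<Rightarrow> 'a set" where
  "gaps_union xs K = (\<Union>k\<in>K. {xs ! k..xs ! Suc k})"

definition sparse_gaps :: "'a list \<Rightarrow> nat set \<Rightarrow> bool" where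
  "sparse_gaps xs K \<longleftrightarrow> (\<forall>k\<in>K. Suc k < length xs \<and> Suc k \<notin> K)"

lemma sparse_gaps_subset: "sparse_gaps xs K \<Longrightarrow> K' \<subseteq> K \<Longrightarrow> sparse_gaps xs K'"
  unfolding sparse_gaps_def by blast

lemma sparse_gaps_finite: "sparse_gaps xs K \<Longrightarrow> finite K"
  unfolding sparse_gaps_def by (meson Suc_lessD finite_lessThan finite_subset lessThan_iff subsetI)

lemma gaps_union_Pfci: "sparse_gaps xs K \<Longrightarrow> gaps_union xs K \<in> Pfci"
  unfolding gaps_union_def Pfci_def closed_intervals_def
  by (intro CollectI exI[of _ "(\<lambda>k. {xs ! k..xs ! Suc k}) ` K"]) (auto dest: sparse_gaps_finite)

lemma sparse_gaps_separated:
  fixes xs :: "'a::linorder list"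
  assumes sorted: "sorted_wrt (<) xs" and "sparse_gaps xs K" "k \<in> K" "m \<in> K" "k \<noteq> m"
  shows "xs ! Suc k < xs ! m \<or> xs ! Suc m < xs ! k"
proof -
  have "Suc k \<noteq> m" "Suc m \<noteq> k" "Suc k < length xs" "Suc m < length xs"
    using assms(2-) unfolding sparse_gaps_def by auto
  then show ?thesis using assms(5) strict_sorted_nth_less_iff[OF sorted] by auto
qed

lemma sparse_gaps_ordered:
  fixes xs :: "'a::linorder list"
  assumes sorted: "sorted_wrt (<) xs" and "sparse_gaps xs K" "k \<in> K"
  shows "xs ! k \<le> xs ! Suc k"
  using assms(2,3) strict_sorted_nth_le_iff[OF sorted] unfolding sparse_gaps_def
  by (meson Suc_lessD le_SucI order_refl)

lemma l_op_gaps_union: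
  fixes xs :: "'a::dense_linorder list"
  assumes sorted: "sorted_wrt (<) xs" and "sparse_gaps xs K"
  shows "l_op (gaps_union xs K) = (!) xs ` K"
  unfolding gaps_union_def
proof (rule l_op_UN_separated)
  show "finite K" using sparse_gaps_finite[OF assms(2)] .
  show "xs ! k \<le> xs ! Suc k" if "k \<in> K" for k using sparse_gaps_ordered[OF assms that] .
  show "xs ! Suc k < xs ! m \<or> xs ! Suc m < xs ! k" if "k \<in> K" "m \<in> K" "k \<noteq> m" for k m
    using sparse_gaps_separated[OF assms that] .
qed

lemma r_op_gaps_union:
  fixes xs :: "'a::dense_linorder list"
  assumes sorted: "sorted_wrt (<) xs" and "sparse_gaps xs K"
  shows "r_op (gaps_union xs K) = (\<lambda>k. xs ! Suc k) ` K"
  unfolding gaps_union_def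
proof (rule r_op_UN_separated)
  show "finite K" using sparse_gaps_finite[OF assms(2)] .
  show "xs ! k \<le> xs ! Suc k" if "k \<in> K" for k using sparse_gaps_ordered[OF assms that] .
  show "xs ! Suc k < xs ! m \<or> xs ! Suc m < xs ! k" if "k \<in> K" "m \<in> K" "k \<noteq> m" for k m
    using sparse_gaps_separated[OF assms that] .
qed

lemma consecutive_blocks_gaps_union:
  fixes xs :: "'a::dense_linorder list"
  assumes sorted: "sorted_wrt (<) xs" and sparse: "sparse_gaps xs K"
  shows "consecutive_blocks (set xs) (gaps_union xs K)"
  unfolding consecutive_blocks_def l_op_gaps_union[OF assms] r_op_gaps_union[OF assms]
proof (intro conjI)
  have bound: "k < length xs" "Suc k < length xs" if "k \<in> K" for k
    using sparse that unfolding sparse_gaps_def by auto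
  show "(!) xs ` K \<union> (\<lambda>k. xs ! Suc k) ` K \<subseteq> set xs"
    using bound by auto
  show "gaps_union xs K \<inter> set xs \<subseteq> (!) xs ` K \<union> (\<lambda>k. xs ! Suc k) ` K"
  proof
    fix x assume "x \<in> gaps_union xs K \<inter> set xs"
    then obtain k i where k: "k \<in> K" "xs ! k \<le> xs ! i" "xs ! i \<le> xs ! Suc k"
      and i: "i < length xs" "x = xs ! i"
      unfolding gaps_union_def by (auto simp: in_set_conv_nth)
    then have "k \<le> i" "i \<le> Suc k"
      using strict_sorted_nth_le_iff[OF sorted bound(1)[OF k(1)] i(1)]
        strict_sorted_nth_le_iff[OF sorted i(1) bound(2)[OF k(1)]] by simp_all
    then have "i = k \<or> i = Suc k" by auto
    then show "x \<in> (!) xs ` K \<union> (\<lambda>k. xs ! Suc k) ` K" using k(1) i(2) by auto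
  qed
  show "(!) xs ` K \<inter> (\<lambda>k. xs ! Suc k) ` K = {}"
  proof (rule ccontr)
    assume "(!) xs ` K \<inter> (\<lambda>k. xs ! Suc k) ` K \<noteq> {}"
    then obtain k m where km: "k \<in> K" "m \<in> K" "xs ! k = xs ! Suc m" by auto
    have "distinct xs" using sorted strict_sorted_iff by blast
    then have "k = Suc m" using km(3) nth_eq_iff_index_eq bound km(1,2) by metis
    then show False using sparse km(1,2) unfolding sparse_gaps_def by blast
  qed
qed

lemma selected_blocks_gaps_union:
  fixes xs :: "'a::dense_linorder list"
  assumes sorted: "sorted_wrt (<) xs" and sparse: "sparse_gaps xs K"
  shows "selected_blocks B (gaps_union xs K) (gaps_union xs {k\<in>K. xs ! Suc k \<in> B})"
proof -
  let ?K' = "{k\<in>K. xs ! Suc k \<in> B}"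
  have sub: "sparse_gaps xs ?K'" by (rule sparse_gaps_subset[OF sparse]) blast
  have "gaps_union xs ?K' \<subseteq> gaps_union xs K" unfolding gaps_union_def by (rule UN_mono) auto
  moreover have "l_op (gaps_union xs ?K') \<subseteq> l_op (gaps_union xs K)"
    unfolding l_op_gaps_union[OF assms] l_op_gaps_union[OF sorted sub] by (rule image_mono) blast
  moreover have "r_op (gaps_union xs ?K') = r_op (gaps_union xs K) \<inter> B"
    unfolding r_op_gaps_union[OF assms] r_op_gaps_union[OF sorted sub] by blast
  ultimately show ?thesis unfolding selected_blocks_def by blast
qed

lemma ips_sorted_list:
  fixes xs :: "'a::linorder list"
  assumes sorted: "sorted_wrt (<) xs"
  shows "ips (set xs) B = (!) xs ` {k. Suc k < length xs \<and> xs ! Suc k \<in> B}"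
proof -
  have next_nth: "next_in (set xs) (xs ! i) (xs ! j) \<longleftrightarrow> j = Suc i"
    if ij: "i < length xs" "j < length xs" for i j
  proof -
    have "next_in (set xs) (xs ! i) (xs ! j) \<longleftrightarrow> i < j \<and> (\<forall>k<length xs. i < k \<longrightarrow> j \<le> k)"
      unfolding next_in_def all_set_conv_all_nth using ij
      by (simp add: strict_sorted_nth_less_iff[OF sorted] strict_sorted_nth_le_iff[OF sorted])
    also have "\<dots> \<longleftrightarrow> j = Suc i"
    proof
      assume h: "i < j \<and> (\<forall>k<length xs. i < k \<longrightarrow> j \<le> k)"
      then have "Suc i < length xs" using ij(2) by simp
      then have "j \<le> Suc i" using h by simp
      then show "j = Suc i" using h by simp
    qed simp
    finally show ?thesis .
  qed
  show ?thesis
  proof (intro set_eqI iffI)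
    fix x assume "x \<in> ips (set xs) B"
    then obtain y where y: "y \<in> B" "next_in (set xs) x y" using in_ips_iff by blast
    then have "x \<in> set xs" "y \<in> set xs" unfolding next_in_def by blast+
    then obtain i j where ij: "i < length xs" "j < length xs" "x = xs ! i" "y = xs ! j"
      unfolding in_set_conv_nth by blast
    then have "j = Suc i" using next_nth y(2) by blast
    then show "x \<in> (!) xs ` {k. Suc k < length xs \<and> xs ! Suc k \<in> B}" using ij y(1) by blast
  next
    fix x assume "x \<in> (!) xs ` {k. Suc k < length xs \<and> xs ! Suc k \<in> B}"
    then obtain k where k: "Suc k < length xs" "xs ! Suc k \<in> B" "x = xs ! k" by blast
    then have "next_in (set xs) x (xs ! Suc k)" using next_nth[of k "Suc k"] by simp
    then show "x \<in> ips (set xs) B" using k(2) in_ips_iff by blast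
  qed
qed

lemma max_op_Un_dominated:
  fixes A :: "'a::linorder set"
  assumes dom: "\<forall>y\<in>X. \<exists>a\<in>A. y \<le> a"
  shows "max_op (X \<union> A) = max_op A"
proof (intro set_eqI iffI)
  fix x assume "x \<in> max_op (X \<union> A)"
  then have x: "x \<in> X \<union> A" "\<forall>y\<in>X \<union> A. y \<le> x" unfolding max_op_def by auto
  have "x \<in> A"
  proof (cases "x \<in> X")
    case True
    then obtain a where "a \<in> A" "x \<le> a" using dom by blast
    moreover have "a \<le> x" using x(2) \<open>a \<in> A\<close> by blast
    ultimately show ?thesis using order.antisym by metis
  qed (use x(1) in blast)
  then show "x \<in> max_op A" using x(2) unfolding max_op_def by blast
next
  fix x assume "x \<in> max_op A"
  then have x: "x \<in> A" "\<forall>y\<in>A. y \<le> x" unfolding max_op_def by auto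
  have "y \<le> x" if "y \<in> X" for y
    using dom that x(2) order_trans by metis
  then show "x \<in> max_op (X \<union> A)" using x unfolding max_op_def by blast
qed

lemma gaps_union_bounded:
  fixes xs :: "'a::linorder list"
  assumes "sparse_gaps xs K" "y \<in> gaps_union xs K"
  shows "\<exists>a\<in>set xs. y \<le> a"
  using assms unfolding gaps_union_def sparse_gaps_def by (fastforce intro: nth_mem)

lemma set_subset_gap_starts_Un_max_op:
  fixes xs :: "'a::linorder list"
  assumes sorted: "sorted_wrt (<) xs"
  shows "set xs \<subseteq> (!) xs ` {k. Suc k < length xs} \<union> max_op (set xs)"
proof
  fix a assume "a \<in> set xs"
  then obtain k where k: "k < length xs" "a = xs ! k" by (auto simp: in_set_conv_nth)
  show "a \<in> (!) xs ` {k. Suc k < length xs} \<union> max_op (set xs)"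
  proof (cases "Suc k < length xs")
    case True
    then show ?thesis using k(2) by blast
  next
    case False
    then have "\<forall>i<length xs. xs ! i \<le> a"
      using k strict_sorted_nth_le_iff[OF sorted] by simp
    then show ?thesis using \<open>a \<in> set xs\<close> unfolding max_op_def by (auto simp: in_set_conv_nth)
  qed
qed

lemma ips_witnesses_exist:
  fixes A :: "'a::dense_linorder set"
  assumes "finite A"
  obtains D E D1 E1 where "D \<in> Pfci" "E \<in> Pfci" "D1 \<in> Pfci" "E1 \<in> Pfci"
    "ips_witnesses A B (ips A B) D E D1 E1"
proof -
  define xs where "xs = sorted_list_of_set A"
  have sorted: "sorted_wrt (<) xs" and A: "set xs = A"
    unfolding xs_def using assms by simp_all
  define K0 where "K0 = {k. Suc k < length xs \<and> even k}"
  define K1 where "K1 = {k. Suc k < length xs \<and> odd k}"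
  define sel where "sel K = {k\<in>K. xs ! Suc k \<in> B}" for K
  have sparse: "sparse_gaps xs K0" "sparse_gaps xs K1"
    unfolding sparse_gaps_def K0_def K1_def by simp_all
  have sparse_sel: "sparse_gaps xs (sel K0)" "sparse_gaps xs (sel K1)"
    by (rule sparse_gaps_subset[OF sparse(1)], simp add: sel_def)
      (rule sparse_gaps_subset[OF sparse(2)], simp add: sel_def)
  have "{k. Suc k < length xs} = K0 \<union> K1" unfolding K0_def K1_def by auto
  then have "A \<subseteq> (!) xs ` (K0 \<union> K1) \<union> max_op A"
    using set_subset_gap_starts_Un_max_op[OF sorted] A by simp
  then have cover: "A \<subseteq> l_op (gaps_union xs K0) \<union> l_op (gaps_union xs K1) \<union> max_op A"
    unfolding l_op_gaps_union[OF sorted sparse(1)] l_op_gaps_union[OF sorted sparse(2)]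
    by (simp add: image_Un)
  have bounded: "max_op (gaps_union xs K0 \<union> gaps_union xs K1 \<union> A) = max_op A"
    using gaps_union_bounded[OF sparse(1)] gaps_union_bounded[OF sparse(2)] A
    by (intro max_op_Un_dominated) blast
  have "{k. Suc k < length xs \<and> xs ! Suc k \<in> B} = sel K0 \<union> sel K1"
    unfolding sel_def K0_def K1_def by auto
  then have "ips A B = l_op (gaps_union xs (sel K0)) \<union> l_op (gaps_union xs (sel K1))"
    using ips_sorted_list[OF sorted, of B] A
    unfolding l_op_gaps_union[OF sorted sparse_sel(1)] l_op_gaps_union[OF sorted sparse_sel(2)]
    by (simp add: image_Un)
  then have "ips_witnesses A B (ips A B) (gaps_union xs K0) (gaps_union xs K1)
      (gaps_union xs (sel K0)) (gaps_union xs (sel K1))"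
    unfolding ips_witnesses_def sel_def
    using cover bounded A sparse consecutive_blocks_gaps_union[OF sorted]
      selected_blocks_gaps_union[OF sorted] by auto
  then show thesis
    using that gaps_union_Pfci sparse sparse_sel by blast
qed

section \<open>The existential formula\<close>

definition fm_subset :: "tm \<Rightarrow> tm \<Rightarrow> fm" where
  "fm_subset s t = TEq (TUn s t) t"

definition fm_consecutive_blocks :: "tm \<Rightarrow> tm \<Rightarrow> fm" where
  "fm_consecutive_blocks A S =
     Conj (fm_subset (TUn (Lt S) (Rt S)) A)
       (Conj (fm_subset (TInter S A) (TUn (Lt S) (Rt S))) (TEq (TInter (Lt S) (Rt S)) Bot))"

definition fm_selected_blocks :: "tm \<Rightarrow> tm \<Rightarrow> tm \<Rightarrow> fm" where
  "fm_selected_blocks B S S1 =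
     Conj (fm_subset S1 S) (Conj (fm_subset (Lt S1) (Lt S)) (TEq (Rt S1) (TInter (Rt S) B)))"

text \<open>Variables 0, 1, 2 hold \<open>A, B, C\<close>; the quantified 3, 4, 5, 6 hold \<open>D, E, D1, E1\<close>.\<close>

definition ips_fm :: fm where
  "ips_fm = TEx 3 (TEx 4 (TEx 5 (TEx 6
     (Conj (fm_consecutive_blocks (Var 0) (Var 3)) (Conj (fm_selected_blocks (Var 1) (Var 3) (Var 5))
     (Conj (fm_consecutive_blocks (Var 0) (Var 4)) (Conj (fm_selected_blocks (Var 1) (Var 4) (Var 6))
     (Conj (fm_subset (Var 0) (TUn (TUn (Lt (Var 3)) (Lt (Var 4))) (Mx (Var 0))))
     (Conj (TEq (Mx (TUn (TUn (Var 3) (Var 4)) (Var 0))) (Mx (Var 0)))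
       (TEq (Var 2) (TUn (Lt (Var 5)) (Lt (Var 6)))))))))))))"

lemma sat_fm_subset: "sat v (fm_subset s t) \<longleftrightarrow> eval_tm v s \<subseteq> eval_tm v t"
  unfolding fm_subset_def by auto

lemma sat_fm_consecutive_blocks:
  "sat v (fm_consecutive_blocks s t) \<longleftrightarrow> consecutive_blocks (eval_tm v s) (eval_tm v t)"
  unfolding fm_consecutive_blocks_def consecutive_blocks_def by (simp add: sat_fm_subset)

lemma sat_fm_selected_blocks:
  "sat v (fm_selected_blocks s t u) \<longleftrightarrow> selected_blocks (eval_tm v s) (eval_tm v t) (eval_tm v u)"
  unfolding fm_selected_blocks_def selected_blocks_def by (simp add: sat_fm_subset)

lemma sat_ips_fm:
  "sat v ips_fm \<longleftrightarrow>
     (\<exists>D\<in>Pfci. \<exists>E\<in>Pfci. \<exists>D1\<in>Pfci. \<exists>E1\<in>Pfci. ips_witnesses (v 0) (v 1) (v 2) D E D1 E1)"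
  unfolding ips_fm_def ips_witnesses_def
  by (simp add: sat_fm_subset sat_fm_consecutive_blocks sat_fm_selected_blocks)

lemma existential_ips_fm: "existential ips_fm"
  unfolding ips_fm_def fm_consecutive_blocks_def fm_selected_blocks_def fm_subset_def by simp

lemma fv_ips_fm: "fv ips_fm \<subseteq> {0, 1, 2}"
  unfolding ips_fm_def fm_consecutive_blocks_def fm_selected_blocks_def fm_subset_def by auto

theorem corollary5p5:
  shows "\<exists>\<phi>. existential \<phi> \<and> fv \<phi> \<subseteq> {0, 1, 2} \<and>
    (\<forall>(A::'a::{dense_linorder,no_top,order_bot} set) B C v.
        finite A \<and> finite B \<and> finite C \<and> (\<forall>n. v n \<in> Pfci) \<and>
        v 0 = A \<and> v 1 = B \<and> v 2 = C \<longrightarrow> (sat v \<phi> \<longleftrightarrow> ips A B = C))"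
proof (intro exI[of _ ips_fm] conjI existential_ips_fm fv_ips_fm allI impI)
  fix A B C :: "'a::{dense_linorder,no_top,order_bot} set" and v :: "nat \<Rightarrow> 'a set"
  assume h: "finite A \<and> finite B \<and> finite C \<and> (\<forall>n. v n \<in> Pfci) \<and> v 0 = A \<and> v 1 = B \<and> v 2 = C"
  then have "sat v ips_fm \<longleftrightarrow>
      (\<exists>D\<in>Pfci. \<exists>E\<in>Pfci. \<exists>D1\<in>Pfci. \<exists>E1\<in>Pfci. ips_witnesses A B C D E D1 E1)"
    by (simp add: sat_ips_fm)
  also have "\<dots> \<longleftrightarrow> ips A B = C"
    using ips_eq_if_witnesses[of A] ips_witnesses_exist[of A B] h by metis
  finally show "sat v ips_fm \<longleftrightarrow> ips A B = C" .
qed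

end
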